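(* Let $n \ge 1$, let $\mathbb{S}^{n-1} = \{x \in \mathbb{R}^n : \sum_{i=1}^n x_i^2 = 1\}$ with its standard rotationally invariant surface measure $d\sigma$, and define \[ \mathrm{Emin}(n) = \frac{1}{\mathrm{vol}\,\mathbb{S}^{n-1}} \int_{\mathbb{S}^{n-1}} \min_{1\le i\le n} |x_i| \, d\sigma . \] Then \[ \mathrm{Emin}(n) = \frac{\Gamma\left(\frac{n}{2}\right)}{\Gamma\left(\frac{n+1}{2}\right)} \int_0^\infty \left(1 - \frac{1}{\sqrt{\pi}}\int_{-y}^{y} e^{-x^2}\,dx\right)^n dy . \]
   Context: $\mathrm{vol}\,\mathbb{S}^{n-1}$ denotes the total surface measure of the unit sphere, so $\mathrm{Emin}(n)$ is the average over the unit sphere of the smallest absolute value of a coordinate. *)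

theory Defs
  imports "HOL-Analysis.Analysis"
begin

text \<open>Rotation-invariant surface measure on the unit sphere of a Euclidean space,
  defined (as usual, e.g. cone-measure construction) by
  sigma(A) = n * lebesgue-volume of the cone {t x | 0 < t <= 1, x in A}.
  This is the standard surface (Hausdorff) measure on the sphere.\<close>
definition sphere_surface :: "('a::euclidean_space) measure" where
  "sphere_surface =
     measure_of (sphere 0 1) (sets (restrict_space borel (sphere 0 1)))
       (\<lambda>A. of_nat DIM('a) * emeasure lborel {t *\<^sub>R x | t x. t \<in> {0<..1} \<and> x \<in> A})"

definition Emin :: "('n::finite) itself \<Rightarrow> real" where
  "Emin _ = (integral\<^sup>L (sphere_surface :: (real^'n) measure) (\<lambda>x. Min ((\<lambda>i. \<bar>x $ i\<bar>) ` UNIV)))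
            / measure (sphere_surface :: (real^'n) measure) (sphere 0 1)"

end

theory Submission
  imports Defs "HOL-Probability.Distributions"
begin

(*
  The cone construction of the surface measure gives
    int_S F dsigma = n * int_{B - {0}} F (x / |x|) dx
  over the punctured unit ball B - {0}. For F nonnegative and positively homogeneous of degree k,
  write |x|^-k - 1 and exp (-|x|^2) as integrals of radial weights over the radii r >= |x|;
  Tonelli and the scaling int_{rB} F = r^(n+k) int_B F then amount to polar integration:
    int_S F dsigma = (n + k) int_B F,   int F(x) exp (-|x|^2) dx = Gamma ((n+k)/2) / 2 * int_S F dsigma.
  For F = 1 and F x = min_i |x_i| this gives
    Emin n = Gamma (n/2) / Gamma ((n+1)/2) * pi^(-n/2) * int min_i |x_i| exp (-|x|^2) dx.
  The last integral is int_0^oo G(y)^n dy by the layer-cake formula, because {x. y < min_i |x_i|}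
  is a product set; here G(y) = int_{|t|>y} exp (-t^2) dt = sqrt pi - int_{-y}^y exp (-t^2) dt.
*)

lemma cone_eq_sgn_vimage:
  fixes A :: "'a::euclidean_space set"
  assumes "A \<subseteq> sphere 0 1"
  shows "{t *\<^sub>R x | t x. t \<in> {0<..1} \<and> x \<in> A} = sgn -` A \<inter> (cball 0 1 - {0})"
proof (intro equalityI subsetI)
  fix x assume "x \<in> {t *\<^sub>R x | t x. t \<in> {0<..1} \<and> x \<in> A}"
  then obtain t y where x: "x = t *\<^sub>R y" "t \<in> {0<..1}" "y \<in> A" by blast
  with assms have "norm y = 1" by auto
  with x show "x \<in> sgn -` A \<inter> (cball 0 1 - {0})"
    by (auto simp: sgn_scaleR sgn_div_norm)
next
  fix x assume "x \<in> sgn -` A \<inter> (cball 0 1 - {0})"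
  then have "x = norm x *\<^sub>R sgn x" "norm x \<in> {0<..1}" "sgn x \<in> A"
    by (auto simp: sgn_div_norm)
  then show "x \<in> {t *\<^sub>R x | t x. t \<in> {0<..1} \<and> x \<in> A}" by blast
qed

lemma sgn_measurable_sphere:
  "(sgn :: 'a::euclidean_space \<Rightarrow> 'a) \<in> restrict_space lborel (cball 0 1 - {0}) \<rightarrow>\<^sub>M restrict_space borel (sphere 0 1)"
proof (rule measurable_restrict_space2)
  show "sgn \<in> space (restrict_space lborel (cball 0 1 - {0})) \<rightarrow> sphere (0::'a) 1"
    by (auto simp: space_restrict_space norm_sgn)
  have "(sgn :: 'a \<Rightarrow> 'a) \<in> borel_measurable borel"
    unfolding sgn_div_norm by measurable
  then show "(sgn :: 'a \<Rightarrow> 'a) \<in> borel_measurable (restrict_space lborel (cball 0 1 - {0}))"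
    by (intro measurable_restrict_space1) simp
qed

lemma sphere_surface_eq_density_distr:
  "(sphere_surface :: 'a::euclidean_space measure) =
     density (distr (restrict_space lborel (cball 0 1 - {0})) (restrict_space borel (sphere 0 1)) sgn)
       (\<lambda>_. of_nat DIM('a))"
  (is "_ = ?D")
proof -
  let ?S = "sphere (0::'a) 1" and ?P = "cball (0::'a) 1 - {0}"
  have "emeasure ?D A = of_nat DIM('a) * emeasure lborel {t *\<^sub>R x | t x. t \<in> {0<..1} \<and> x \<in> A}"
    if A: "A \<in> sets (restrict_space borel ?S)" for A
  proof -
    have "emeasure ?D A = of_nat DIM('a) * emeasure (restrict_space lborel ?P) (sgn -` A \<inter> ?P)"
      using A by (simp add: emeasure_density_const emeasure_distr[OF sgn_measurable_sphere A]
          space_restrict_space)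
    also have "emeasure (restrict_space lborel ?P) (sgn -` A \<inter> ?P) = emeasure lborel (sgn -` A \<inter> ?P)"
      by (rule emeasure_restrict_space) auto
    also have "sgn -` A \<inter> ?P = {t *\<^sub>R x | t x. t \<in> {0<..1} \<and> x \<in> A}"
      using A sets.sets_into_space by (intro cone_eq_sgn_vimage[symmetric]) fastforce
    finally show ?thesis .
  qed
  then have "sphere_surface = measure_of ?S (sets (restrict_space borel ?S)) (emeasure ?D)"
    unfolding sphere_surface_def
    using sets.sigma_sets_eq[of "restrict_space borel ?S"] sets.space_closed[of "restrict_space borel ?S"]
    by (intro measure_of_eq) (auto simp: space_restrict_space)
  also have "\<dots> = ?D"
    using measure_of_of_measure[of ?D] by (simp add: space_restrict_space)
  finally show ?thesis .
qed

lemma space_sphere_surface: "space (sphere_surface :: 'a::euclidean_space measure) = sphere 0 1"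
  by (subst sphere_surface_eq_density_distr) (simp add: space_restrict_space)

lemma sets_sphere_surface:
  "sets (sphere_surface :: 'a::euclidean_space measure) = sets (restrict_space borel (sphere 0 1))"
  by (subst sphere_surface_eq_density_distr) simp

lemma nn_integral_sphere_surface:
  fixes g :: "'a::euclidean_space \<Rightarrow> ennreal"
  assumes [measurable]: "g \<in> borel_measurable borel"
  shows "(\<integral>\<^sup>+ x. g x \<partial>sphere_surface) =
         of_nat DIM('a) * (\<integral>\<^sup>+ x. g (sgn x) * indicator (cball 0 1 - {0}) x \<partial>lborel)"
proof -
  let ?S = "sphere (0::'a) 1" and ?P = "cball (0::'a) 1 - {0}"
  have g: "g \<in> borel_measurable (distr (restrict_space lborel ?P) (restrict_space borel ?S) sgn)"
    by (simp add: measurable_restrict_space1)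
  have "(\<integral>\<^sup>+ x. g x \<partial>sphere_surface) =
        of_nat DIM('a) * (\<integral>\<^sup>+ x. g x \<partial>distr (restrict_space lborel ?P) (restrict_space borel ?S) sgn)"
    using g by (simp add: sphere_surface_eq_density_distr nn_integral_density nn_integral_cmult)
  also have "(\<integral>\<^sup>+ x. g x \<partial>distr (restrict_space lborel ?P) (restrict_space borel ?S) sgn) =
             (\<integral>\<^sup>+ x. g (sgn x) * indicator ?P x \<partial>lborel)"
    using g by (simp add: nn_integral_distr[OF sgn_measurable_sphere] nn_integral_restrict_space)
  finally show ?thesis .
qed

lemma tendsto_neg_exp_neg_square: "((\<lambda>r::real. - exp (- r\<^sup>2)) \<longlongrightarrow> 0) at_top"
proof -
  have "filterlim (\<lambda>r::real. - r\<^sup>2) at_bot at_top"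
    by (simp add: filterlim_uminus_at_bot filterlim_pow_at_top filterlim_ident)
  then show ?thesis
    using tendsto_minus[OF filterlim_compose[OF exp_at_bot]] by simp
qed

lemma borel_cball [measurable]: "cball (c::'a::euclidean_space) r \<in> sets borel"
  by (simp add: borel_closed)

lemma nn_integral_cball_homogeneous:
  fixes F :: "'a::euclidean_space \<Rightarrow> ennreal"
  assumes [measurable]: "F \<in> borel_measurable borel"
    and hom: "\<And>c x. c > 0 \<Longrightarrow> F (c *\<^sub>R x) = ennreal (c ^ k) * F x" and r: "r > 0"
  shows "(\<integral>\<^sup>+ x. F x * indicator (cball 0 r) x \<partial>lborel) =
         ennreal (r ^ (DIM('a) + k)) * (\<integral>\<^sup>+ x. F x * indicator (cball 0 1) x \<partial>lborel)"
proof -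
  have lborel_scale: "density (distr lborel borel (\<lambda>x. 0 + r *\<^sub>R x)) (\<lambda>_. \<bar>r\<bar> ^ DIM('a)) = (lborel :: 'a measure)"
    using r by (intro lborel_affine[symmetric]) simp
  have "(\<integral>\<^sup>+ x. F x * indicator (cball 0 r) x \<partial>lborel) =
        (\<integral>\<^sup>+ x. F x * indicator (cball 0 r) x \<partial>density (distr lborel borel (\<lambda>x. 0 + r *\<^sub>R x)) (\<lambda>_. \<bar>r\<bar> ^ DIM('a)))"
    by (simp only: lborel_scale)
  also have "\<dots> = (\<integral>\<^sup>+ x. ennreal (\<bar>r\<bar> ^ DIM('a)) * (F (r *\<^sub>R x) * indicator (cball 0 r) (r *\<^sub>R x)) \<partial>lborel)"
    by (subst nn_integral_density) (simp_all add: nn_integral_distr)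
  also have "\<dots> = (\<integral>\<^sup>+ x. ennreal (r ^ (DIM('a) + k)) * (F x * indicator (cball 0 1) x) \<partial>lborel)"
  proof (rule nn_integral_cong)
    fix x :: 'a
    have "r *\<^sub>R x \<in> cball 0 r \<longleftrightarrow> x \<in> cball 0 1"
      using r by (simp add: mult_le_cancel_left1)
    then show "ennreal (\<bar>r\<bar> ^ DIM('a)) * (F (r *\<^sub>R x) * indicator (cball 0 r) (r *\<^sub>R x)) =
               ennreal (r ^ (DIM('a) + k)) * (F x * indicator (cball 0 1) x)"
      using r by (simp add: hom indicator_def power_add ennreal_mult' mult_ac)
  qed
  also have "\<dots> = ennreal (r ^ (DIM('a) + k)) * (\<integral>\<^sup>+ x. F x * indicator (cball 0 1) x \<partial>lborel)"
    by (simp add: nn_integral_cmult)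
  finally show ?thesis .
qed

lemma pred_mem_cball_pair [measurable]:
  "Measurable.pred (borel \<Otimes>\<^sub>M borel) (\<lambda>p::'a::euclidean_space \<times> real. fst p \<in> cball 0 (snd p))"
  unfolding mem_cball_0 by measurable

lemma nn_integral_radial_layers_homogeneous:
  fixes F :: "'a::euclidean_space \<Rightarrow> ennreal" and W :: "real \<Rightarrow> ennreal"
  assumes [measurable]: "F \<in> borel_measurable borel"
    and hom: "\<And>c x. c > 0 \<Longrightarrow> F (c *\<^sub>R x) = ennreal (c ^ k) * F x"
    and [measurable]: "W \<in> borel_measurable borel"
  shows "(\<integral>\<^sup>+ x. F x * (\<integral>\<^sup>+ r. W r * indicator {0..} r * indicator (cball 0 r) x \<partial>lborel) \<partial>lborel) =
         (\<integral>\<^sup>+ r. W r * indicator {0..} r * ennreal (r ^ (DIM('a) + k)) \<partial>lborel) *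
         (\<integral>\<^sup>+ x. F x * indicator (cball 0 1) x \<partial>lborel)"
proof -
  let ?K = "\<integral>\<^sup>+ x. F x * indicator (cball 0 1) x \<partial>lborel"
  let ?G = "\<lambda>x r. F x * (W r * indicator {0..} r * indicator (cball 0 r) x)"
  have "(\<lambda>(x, r). ?G x r) \<in> borel_measurable (lborel \<Otimes>\<^sub>M lborel)"
    by measurable
  then have "(\<integral>\<^sup>+ x. (\<integral>\<^sup>+ r. ?G x r \<partial>lborel) \<partial>lborel) = (\<integral>\<^sup>+ r. (\<integral>\<^sup>+ x. ?G x r \<partial>lborel) \<partial>lborel)"
    by (rule lborel_pair.Fubini'[symmetric])
  moreover have "(\<integral>\<^sup>+ r. ?G x r \<partial>lborel) = F x * (\<integral>\<^sup>+ r. W r * indicator {0..} r * indicator (cball 0 r) x \<partial>lborel)"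
    for x by (rule nn_integral_cmult) (simp add: indicator_def mem_cball)
  moreover have "(\<integral>\<^sup>+ x. ?G x r \<partial>lborel) = W r * indicator {0..} r * (\<integral>\<^sup>+ x. F x * indicator (cball 0 r) x \<partial>lborel)"
    for r by (subst nn_integral_cmult[symmetric]) (simp_all add: mult_ac)
  ultimately have "(\<integral>\<^sup>+ x. F x * (\<integral>\<^sup>+ r. W r * indicator {0..} r * indicator (cball 0 r) x \<partial>lborel) \<partial>lborel) =
        (\<integral>\<^sup>+ r. W r * indicator {0..} r * (\<integral>\<^sup>+ x. F x * indicator (cball 0 r) x \<partial>lborel) \<partial>lborel)"
    by simp
  also have "\<dots> = (\<integral>\<^sup>+ r. W r * indicator {0..} r * ennreal (r ^ (DIM('a) + k)) * ?K \<partial>lborel)"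
  proof (rule nn_integral_cong)
    fix r :: real
    consider "r < 0" | "r = 0" | "r > 0" by linarith
    then show "W r * indicator {0..} r * (\<integral>\<^sup>+ x. F x * indicator (cball 0 r) x \<partial>lborel) =
               W r * indicator {0..} r * ennreal (r ^ (DIM('a) + k)) * ?K"
    proof cases
      case 2
      have "AE x in lborel. F x * indicator (cball 0 r) x = 0"
        using 2 by (intro AE_I'[where N="{0}"]) (auto simp: indicator_def)
      then show ?thesis using 2 by (simp add: nn_integral_0_iff_AE)
    next
      case 3
      then show ?thesis by (simp add: nn_integral_cball_homogeneous[OF assms(1) hom 3] mult.assoc)
    qed simp
  qed
  also have "\<dots> = (\<integral>\<^sup>+ r. W r * indicator {0..} r * ennreal (r ^ (DIM('a) + k)) \<partial>lborel) * ?K"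
    by (simp add: nn_integral_multc)
  finally show ?thesis .
qed

lemma nn_integral_gaussian_layers:
  "(\<integral>\<^sup>+ r. ennreal (2 * r * exp (- r\<^sup>2)) * indicator {0..} r * indicator (cball 0 r) x \<partial>lborel) =
   ennreal (exp (- (norm (x::'a::euclidean_space))\<^sup>2))"
proof -
  have "(\<integral>\<^sup>+ r. ennreal (2 * r * exp (- r\<^sup>2)) * indicator {0..} r * indicator (cball 0 r) x \<partial>lborel) =
        (\<integral>\<^sup>+ r. ennreal (2 * r * exp (- r\<^sup>2)) * indicator {norm x..} r \<partial>lborel)"
    by (intro nn_integral_cong) (auto simp: indicator_def dest: order_trans[OF norm_ge_zero])
  also have "\<dots> = ennreal (0 - (- exp (- (norm x)\<^sup>2)))"
  proof (rule nn_integral_FTC_atLeast)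
    fix r :: real assume "norm x \<le> r"
    then have "0 \<le> r" using norm_ge_zero order_trans by blast
    then show "0 \<le> 2 * r * exp (- r\<^sup>2)" by simp
    show "((\<lambda>r. - exp (- r\<^sup>2)) has_real_derivative 2 * r * exp (- r\<^sup>2)) (at r)"
      by (auto intro!: derivative_eq_intros simp: power2_eq_square)
  qed (simp_all add: tendsto_neg_exp_neg_square)
  finally show ?thesis by simp
qed

lemma has_real_derivative_neg_inverse_power:
  "0 < r \<Longrightarrow> ((\<lambda>r. - (1 / r ^ k)) has_real_derivative k / r ^ Suc k) (at r)"
  by (rule derivative_eq_intros refl | simp)+ (cases k, simp_all)

lemma nn_integral_inverse_power_layers:
  fixes x :: "'a::euclidean_space"
  assumes "0 < norm x" "norm x \<le> 1"
  shows "(\<integral>\<^sup>+ r. ennreal (k / r ^ Suc k) * indicator {0<..1} r * indicator {0..} r * indicator (cball 0 r) x \<partial>lborel) =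
         ennreal (1 / norm x ^ k - 1)"
proof -
  have "(\<integral>\<^sup>+ r. ennreal (k / r ^ Suc k) * indicator {0<..1} r * indicator {0..} r * indicator (cball 0 r) x \<partial>lborel) =
        (\<integral>\<^sup>+ r. ennreal (k / r ^ Suc k) * indicator {norm x..1} r \<partial>lborel)"
    using assms by (intro nn_integral_cong) (auto simp: indicator_def dest: order_trans[OF norm_ge_zero])
  also have "\<dots> = ennreal (- (1 / 1 ^ k) - (- (1 / norm x ^ k)))"
  proof (rule nn_integral_FTC_Icc)
    fix r :: real assume "r \<in> {norm x..1}"
    then have r: "0 < r" using assms(1) by (meson atLeastAtMost_iff less_le_trans)
    then show "0 \<le> k / r ^ Suc k" by simp
    show "((\<lambda>r. - (1 / r ^ k)) has_real_derivative k / r ^ Suc k) (at r)"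
      using r by (rule has_real_derivative_neg_inverse_power)
  qed (use assms in simp_all)
  finally show ?thesis by simp
qed

lemma nn_integral_inverse_power_moment:
  assumes "0 < n"
  shows "(\<integral>\<^sup>+ r. ennreal (k / r ^ Suc k) * indicator {0<..1} r * indicator {0..} r * ennreal (r ^ (n + k)) \<partial>lborel) =
         ennreal (k / n)"
proof -
  have "(\<integral>\<^sup>+ r. ennreal (k / r ^ Suc k) * indicator {0<..1} r * indicator {0..} r * ennreal (r ^ (n + k)) \<partial>lborel) =
        (\<integral>\<^sup>+ r. ennreal (k * r ^ (n - 1)) * indicator {0..1} r \<partial>lborel)"
  proof (intro nn_integral_cong_AE)
    have "n + k = Suc k + (n - 1)"
      using assms by simp
    then have power: "r ^ (n + k) = r ^ Suc k * r ^ (n - 1)" for r :: real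
      by (simp only: power_add)
    show "AE r in lborel. ennreal (k / r ^ Suc k) * indicator {0<..1} r * indicator {0..} r * ennreal (r ^ (n + k)) =
                               ennreal (k * r ^ (n - 1)) * indicator {0..1} r"
      using AE_lborel_singleton[of "0::real"]
      by eventually_elim (auto simp: power indicator_def ennreal_mult'[symmetric])
  qed
  also have "\<dots> = ennreal (k * (1::real) ^ n / n - k * (0::real) ^ n / n)"
    using assms by (intro nn_integral_FTC_Icc) (auto intro!: derivative_eq_intros)
  finally show ?thesis
    using assms by (simp add: zero_power)
qed

lemma nn_integral_sphere_surface_homogeneous:
  fixes F :: "'a::euclidean_space \<Rightarrow> ennreal"
  assumes [measurable]: "F \<in> borel_measurable borel"
    and hom: "\<And>c x. c > 0 \<Longrightarrow> F (c *\<^sub>R x) = ennreal (c ^ k) * F x"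
  shows "(\<integral>\<^sup>+ x. F x \<partial>sphere_surface) =
         of_nat (DIM('a) + k) * (\<integral>\<^sup>+ x. F x * indicator (cball 0 1) x \<partial>lborel)"
proof -
  let ?n = "DIM('a)"
  let ?K = "\<integral>\<^sup>+ x. F x * indicator (cball 0 1) x \<partial>lborel"
  let ?W = "\<lambda>r::real. ennreal (k / r ^ Suc k) * indicator {0<..1} r"
  let ?L = "\<lambda>x::'a. \<integral>\<^sup>+ r. ?W r * indicator {0..} r * indicator (cball 0 r) x \<partial>lborel"
  have sgn_layers: "F (sgn x) * indicator (cball 0 1 - {0}) x = F x * indicator (cball 0 1) x + F x * ?L x"
    if "x \<noteq> 0" for x :: 'a
  proof (cases "norm x \<le> 1")
    case True
    have "F (sgn x) = ennreal ((1 / norm x) ^ k) * F x"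
      using \<open>x \<noteq> 0\<close> by (simp add: sgn_div_norm divide_inverse_commute hom)
    also have "1 \<le> 1 / norm x ^ k"
      using True \<open>x \<noteq> 0\<close> by (simp add: power_le_one)
    then have "ennreal ((1 / norm x) ^ k) = ennreal 1 + ennreal (1 / norm x ^ k - 1)"
      by (subst ennreal_plus[symmetric]) (simp_all add: power_one_over)
    also have "ennreal (1 / norm x ^ k - 1) = ?L x"
      using True \<open>x \<noteq> 0\<close> by (intro nn_integral_inverse_power_layers[symmetric]) auto
    finally show ?thesis using True \<open>x \<noteq> 0\<close> by (simp add: distrib_left mult.commute)
  next
    case False
    then have "?L x = 0" by (intro nn_integral_zero') (auto simp: indicator_def)
    then show ?thesis using False by simp
  qed
  have "(\<integral>\<^sup>+ x. F x \<partial>sphere_surface) = of_nat ?n * (\<integral>\<^sup>+ x. F (sgn x) * indicator (cball 0 1 - {0}) x \<partial>lborel)"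
    by (simp add: nn_integral_sphere_surface)
  also have "(\<integral>\<^sup>+ x. F (sgn x) * indicator (cball 0 1 - {0}) x \<partial>lborel) =
             (\<integral>\<^sup>+ x. F x * indicator (cball 0 1) x + F x * ?L x \<partial>lborel)"
    using AE_lborel_singleton[of "0::'a"] sgn_layers
    by (intro nn_integral_cong_AE) (auto elim!: eventually_mono)
  also have "\<dots> = ?K + (\<integral>\<^sup>+ x. F x * ?L x \<partial>lborel)"
    by (rule nn_integral_add) measurable
  also have "(\<integral>\<^sup>+ x. F x * ?L x \<partial>lborel) = (\<integral>\<^sup>+ r. ?W r * indicator {0..} r * ennreal (r ^ (?n + k)) \<partial>lborel) * ?K"
    by (rule nn_integral_radial_layers_homogeneous[OF assms]) measurable
  also have "(\<integral>\<^sup>+ r. ?W r * indicator {0..} r * ennreal (r ^ (?n + k)) \<partial>lborel) = ennreal (k / ?n)"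
    by (rule nn_integral_inverse_power_moment) simp
  finally have "(\<integral>\<^sup>+ x. F x \<partial>sphere_surface) = of_nat ?n * ?K + of_nat ?n * ennreal (k / ?n) * ?K"
    by (simp add: distrib_left mult.assoc)
  also have "of_nat ?n * ennreal (k / ?n) = of_nat k"
    by (simp add: ennreal_of_nat_eq_real_of_nat flip: ennreal_mult)
  finally show ?thesis
    by (simp add: distrib_right)
qed

lemma Gamma_nat_plus_half: "Gamma (real k + 1 / 2) = sqrt pi * pochhammer (1 / 2) k"
proof -
  have "(1 / 2 :: real) \<notin> \<int>\<^sub>\<le>\<^sub>0"
    by (auto elim!: nonpos_Ints_cases)
  then show ?thesis
    using pochhammer_Gamma[of "1 / 2 :: real" k] by (simp add: Gamma_one_half_real add.commute)
qed

lemma has_bochner_integral_gaussian_moment: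
  "has_bochner_integral lborel (\<lambda>r. indicator {0..} r *\<^sub>R (exp (- r\<^sup>2) * r ^ Suc m))
     (Gamma (real m / 2 + 1) / 2)"
proof (cases "even m")
  case True
  then obtain k where m: "m = 2 * k" by blast
  then have "Gamma (real m / 2 + 1) = fact k"
    using Gamma_fact[of k, where 'a=real] by (simp add: add.commute)
  then show ?thesis
    using gaussian_moment_odd_pos[of k] m by simp
next
  case False
  then obtain k where m: "Suc m = 2 * k" by (metis even_Suc evenE)
  then have "real m / 2 + 1 = real k + 1 / 2" by linarith
  then have "Gamma (real m / 2 + 1) = sqrt pi * (fact (2 * k) / (2 ^ (2 * k) * fact k))"
    by (simp add: Gamma_nat_plus_half fact_double[of k])
  then show ?thesis
    using gaussian_moment_even_pos[of k] m by (simp add: ac_simps)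
qed

lemma nn_integral_gaussian_moment:
  "(\<integral>\<^sup>+ r. ennreal (2 * r * exp (- r\<^sup>2)) * indicator {0..} r * ennreal (r ^ m) \<partial>lborel) =
   ennreal (Gamma (real m / 2 + 1))"
proof -
  let ?f = "\<lambda>r::real. 2 * (indicator {0..} r *\<^sub>R (exp (- r\<^sup>2) * r ^ Suc m))"
  have "has_bochner_integral lborel ?f (Gamma (real m / 2 + 1))"
    using has_bochner_integral_mult_right[OF has_bochner_integral_gaussian_moment, of 2 m] by simp
  then have "(\<integral>\<^sup>+ r. ennreal (?f r) \<partial>lborel) = ennreal (Gamma (real m / 2 + 1))"
    by (subst nn_integral_eq_integral) (auto simp: has_bochner_integral_iff indicator_def)
  moreover have "ennreal (2 * r * exp (- r\<^sup>2)) * indicator {0..} r * ennreal (r ^ m) = ennreal (?f r)" for r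
    by (auto simp: indicator_def ennreal_mult'' [symmetric] mult_ac)
  ultimately show ?thesis
    by simp
qed

lemma nn_integral_gaussian_homogeneous:
  fixes F :: "'a::euclidean_space \<Rightarrow> ennreal"
  assumes [measurable]: "F \<in> borel_measurable borel"
    and hom: "\<And>c x. c > 0 \<Longrightarrow> F (c *\<^sub>R x) = ennreal (c ^ k) * F x"
  shows "(\<integral>\<^sup>+ x. F x * ennreal (exp (- (norm x)\<^sup>2)) \<partial>lborel) =
         ennreal (Gamma ((DIM('a) + k) / 2) / 2) * (\<integral>\<^sup>+ x. F x \<partial>sphere_surface)"
proof -
  let ?m = "DIM('a) + k"
  have "0 < real ?m / 2"
    by (simp add: add_pos_nonneg)
  then have "real ?m / 2 \<notin> \<int>\<^sub>\<le>\<^sub>0"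
    by (meson nonpos_Ints_nonpos not_le)
  then have Gamma_m: "Gamma (real ?m / 2 + 1) = Gamma (real ?m / 2) / 2 * real ?m"
    by (simp add: Gamma_plus1)
  have "(\<integral>\<^sup>+ x. F x * ennreal (exp (- (norm x)\<^sup>2)) \<partial>lborel) =
        ennreal (Gamma (real ?m / 2 + 1)) * (\<integral>\<^sup>+ x. F x * indicator (cball 0 1) x \<partial>lborel)"
    by (simp add: nn_integral_gaussian_layers [symmetric] nn_integral_radial_layers_homogeneous[OF assms]
        nn_integral_gaussian_moment)
  also have "ennreal (Gamma (real ?m / 2 + 1)) = ennreal (Gamma (real ?m / 2) / 2) * of_nat ?m"
    by (simp only: Gamma_m ennreal_mult'' of_nat_0_le_iff ennreal_of_nat_eq_real_of_nat)
  finally show ?thesis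
    by (simp add: nn_integral_sphere_surface_homogeneous[OF assms] mult.assoc)
qed

lemma exp_neg_norm_square_eq_prod:
  "exp (- (norm (x::'a::euclidean_space))\<^sup>2) = (\<Prod>b\<in>Basis. exp (- (x \<bullet> b)\<^sup>2))"
proof -
  have "(norm x)\<^sup>2 = (\<Sum>b\<in>Basis. (x \<bullet> b)\<^sup>2)"
    by (simp add: norm_eq_sqrt_inner euclidean_inner[of x x] power2_eq_square sum_nonneg)
  then show ?thesis
    by (simp add: exp_sum[symmetric] sum_negf)
qed

lemma nn_integral_gaussian_real: "(\<integral>\<^sup>+ t. ennreal (exp (- t\<^sup>2)) \<partial>lborel) = ennreal (sqrt pi)"
proof -
  have "has_bochner_integral lborel (\<lambda>t. exp (- t\<^sup>2)) (2 *\<^sub>R (sqrt pi / 2))"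
    by (rule has_bochner_integral_even_function[OF gaussian_moment_0]) simp
  then show ?thesis
    by (subst nn_integral_eq_integral) (auto simp: has_bochner_integral_iff)
qed

lemma nn_integral_gaussian:
  "(\<integral>\<^sup>+ x. ennreal (exp (- (norm x)\<^sup>2)) \<partial>(lborel::'a::euclidean_space measure)) = ennreal (sqrt pi ^ DIM('a))"
proof -
  have "(\<integral>\<^sup>+ x. ennreal (exp (- (norm x)\<^sup>2)) \<partial>(lborel::'a measure)) =
        (\<integral>\<^sup>+ x. (\<Prod>b\<in>Basis. ennreal (exp (- (x \<bullet> b)\<^sup>2))) \<partial>(lborel::'a measure))"
    by (intro nn_integral_cong) (simp add: exp_neg_norm_square_eq_prod prod_ennreal)
  also have "\<dots> = (\<Prod>b\<in>(Basis::'a set). (\<integral>\<^sup>+ t. ennreal (exp (- t\<^sup>2)) \<partial>lborel))"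
    by (rule nn_integral_lborel_prod) auto
  finally show ?thesis
    by (simp add: nn_integral_gaussian_real ennreal_power)
qed

lemma borel_measurable_sphere_surfaceI:
  fixes f :: "'a::euclidean_space \<Rightarrow> real"
  assumes "f \<in> borel_measurable borel"
  shows "f \<in> borel_measurable sphere_surface"
proof -
  have "f \<in> borel_measurable (restrict_space borel (sphere (0::'a) 1))"
    using assms by (rule measurable_restrict_space1)
  then show ?thesis
    using measurable_cong_sets[OF sets_sphere_surface[where 'a='a] refl, of "borel :: real measure"] by simp
qed

lemma integral_gaussian_homogeneous:
  fixes f :: "'a::euclidean_space \<Rightarrow> real"
  assumes [measurable]: "f \<in> borel_measurable borel" and f_nonneg: "\<And>x. 0 \<le> f x"
    and hom: "\<And>c x. c > 0 \<Longrightarrow> f (c *\<^sub>R x) = c ^ k * f x"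
  shows "(\<integral>x. f x * exp (- (norm x)\<^sup>2) \<partial>lborel) =
         Gamma ((DIM('a) + k) / 2) / 2 * integral\<^sup>L sphere_surface f"
proof -
  have "ennreal (f (c *\<^sub>R x)) = ennreal (c ^ k) * ennreal (f x)" if "c > 0" for c x
    using that f_nonneg by (simp add: hom ennreal_mult)
  then have "(\<integral>\<^sup>+ x. ennreal (f x * exp (- (norm x)\<^sup>2)) \<partial>lborel) =
             ennreal (Gamma ((DIM('a) + k) / 2) / 2) * (\<integral>\<^sup>+ x. ennreal (f x) \<partial>sphere_surface)"
    using f_nonneg by (simp add: nn_integral_gaussian_homogeneous ennreal_mult')
  then have "enn2real (\<integral>\<^sup>+ x. ennreal (f x * exp (- (norm x)\<^sup>2)) \<partial>lborel) =
             Gamma ((DIM('a) + k) / 2) / 2 * enn2real (\<integral>\<^sup>+ x. ennreal (f x) \<partial>sphere_surface)"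
    by (simp add: enn2real_mult add_pos_nonneg)
  then show ?thesis
    using f_nonneg by (simp add: integral_eq_nn_integral borel_measurable_sphere_surfaceI)
qed

lemma Gamma_half_of_nat_neq_0: "0 < n \<Longrightarrow> Gamma (real n / 2) \<noteq> 0"
  by (metis Gamma_real_pos half_gt_zero of_nat_0_less_iff order_less_irrefl)

lemma measure_sphere_surface: 
  "measure (sphere_surface :: 'a::euclidean_space measure) (sphere 0 1) = 2 * sqrt pi ^ DIM('a) / Gamma (DIM('a) / 2)"
proof -
  have "(\<integral>x. exp (- (norm x)\<^sup>2) \<partial>(lborel :: 'a measure)) = sqrt pi ^ DIM('a)"
    by (simp add: integral_eq_nn_integral nn_integral_gaussian)
  moreover have "(\<integral>x. 1 * exp (- (norm x)\<^sup>2) \<partial>(lborel :: 'a measure)) =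
                 Gamma (DIM('a) / 2) / 2 * measure (sphere_surface :: 'a measure) (sphere 0 1)"
    using integral_gaussian_homogeneous[where 'a='a and f="\<lambda>_. 1" and k=0]
    by (simp add: space_sphere_surface)
  ultimately show ?thesis
    using Gamma_half_of_nat_neq_0[of "DIM('a)"] by (simp add: field_simps)
qed

lemma sphere_surface_average_homogeneous:
  fixes f :: "'a::euclidean_space \<Rightarrow> real"
  assumes "f \<in> borel_measurable borel" "\<And>x. 0 \<le> f x"
    and "\<And>c x. c > 0 \<Longrightarrow> f (c *\<^sub>R x) = c ^ k * f x"
  shows "integral\<^sup>L sphere_surface f / measure (sphere_surface :: 'a measure) (sphere 0 1) =
         Gamma (DIM('a) / 2) / Gamma ((DIM('a) + k) / 2) *
         (\<integral>x. f x * exp (- (norm x)\<^sup>2) \<partial>lborel) / sqrt pi ^ DIM('a)"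
proof -
  show ?thesis
    using Gamma_half_of_nat_neq_0[of "DIM('a) + k"]
    by (simp add: integral_gaussian_homogeneous[OF assms] measure_sphere_surface field_simps)
qed

definition min_abs_coord :: "'a::euclidean_space \<Rightarrow> real" where
  "min_abs_coord x = Min ((\<lambda>b. \<bar>x \<bullet> b\<bar>) ` Basis)"

lemma min_abs_coord_nonneg: "0 \<le> min_abs_coord x"
  unfolding min_abs_coord_def by (auto simp: Min_ge_iff)

lemma less_min_abs_coord_iff: "y < min_abs_coord x \<longleftrightarrow> (\<forall>b\<in>Basis. y < \<bar>x \<bullet> b\<bar>)"
  unfolding min_abs_coord_def by (subst Min_gr_iff) auto

lemma min_abs_coord_scaleR:
  assumes "0 \<le> c"
  shows "min_abs_coord (c *\<^sub>R x) = c * min_abs_coord x"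
proof -
  have "mono ((*) c)"
    using assms by (auto simp: mono_def mult_left_mono)
  then have "c * min_abs_coord x = Min ((*) c ` (\<lambda>b. \<bar>x \<bullet> b\<bar>) ` Basis)"
    unfolding min_abs_coord_def by (rule mono_Min_commute) auto
  then show ?thesis
    unfolding min_abs_coord_def image_image using assms by (simp add: abs_mult)
qed

lemma borel_measurable_min_abs_coord [measurable]: "min_abs_coord \<in> borel_measurable borel"
  unfolding min_abs_coord_def by measurable

definition gaussian_tail :: "real \<Rightarrow> ennreal" where
  "gaussian_tail y = (\<integral>\<^sup>+ t. indicator {t. y < \<bar>t\<bar>} t * ennreal (exp (- t\<^sup>2)) \<partial>lborel)"

lemma borel_measurable_gaussian_tail [measurable]: "gaussian_tail \<in> borel_measurable borel"
  unfolding gaussian_tail_def[abs_def]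
  by (rule sigma_finite_measure.borel_measurable_nn_integral[OF sigma_finite_lborel]) measurable

lemma gaussian_tail_le: "gaussian_tail y \<le> ennreal (sqrt pi)"
  unfolding gaussian_tail_def nn_integral_gaussian_real[symmetric]
  by (intro nn_integral_mono) (simp add: indicator_def)

lemma gaussian_tail_less_top: "gaussian_tail y < top"
  using gaussian_tail_le[of y] by (simp add: le_less_trans)

lemma enn2real_gaussian_tail:
  assumes "0 \<le> y"
  shows "enn2real (gaussian_tail y) = sqrt pi - (LBINT t=-y..y. exp (- (t ^ 2)))"
proof -
  let ?E = "LBINT t=-y..y. exp (- (t ^ 2))"
  have "integrable lborel (\<lambda>t. exp (- (t ^ 2)) * indicator {-y..y} t)"
    by (rule borel_integrable_atLeastAtMost) (auto intro!: continuous_intros)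
  then have "(\<integral>\<^sup>+ t. ennreal (exp (- (t ^ 2)) * indicator {-y..y} t) \<partial>lborel) =
             ennreal (integral\<^sup>L lborel (\<lambda>t. exp (- (t ^ 2)) * indicator {-y..y} t))"
    by (rule nn_integral_eq_integral) auto
  also have "integral\<^sup>L lborel (\<lambda>t. exp (- (t ^ 2)) * indicator {-y..y} t) = ?E"
    using assms by (simp add: interval_integral_Icc set_lebesgue_integral_def mult.commute)
  finally have middle: "(\<integral>\<^sup>+ t. indicator {-y..y} t * ennreal (exp (- t\<^sup>2)) \<partial>lborel) = ennreal ?E"
    by (simp add: indicator_mult_ennreal mult.commute)
  have "ennreal (sqrt pi) = (\<integral>\<^sup>+ t. indicator {t. y < \<bar>t\<bar>} t * ennreal (exp (- t\<^sup>2)) +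
                                      indicator {-y..y} t * ennreal (exp (- t\<^sup>2)) \<partial>lborel)"
    unfolding nn_integral_gaussian_real[symmetric] by (intro nn_integral_cong) (auto simp: indicator_def)
  also have "\<dots> = gaussian_tail y + ennreal ?E"
    unfolding gaussian_tail_def middle[symmetric] by (rule nn_integral_add) measurable
  finally have "enn2real (ennreal (sqrt pi)) = enn2real (gaussian_tail y + ennreal ?E)"
    by (rule arg_cong)
  also have "\<dots> = enn2real (gaussian_tail y) + ?E"
    using assms by (subst enn2real_plus) (auto simp: gaussian_tail_less_top interval_integral_Icc
        set_lebesgue_integral_def)
  finally show ?thesis
    by simp
qed

lemma indicator_less_min_abs_coord_gaussian:
  "indicator {x. y < min_abs_coord x} x * ennreal (exp (- (norm x)\<^sup>2)) =
   (\<Prod>b\<in>Basis. indicator {t. y < \<bar>t\<bar>} (x \<bullet> b) * ennreal (exp (- (x \<bullet> b)\<^sup>2)))"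
proof (cases "\<forall>b\<in>Basis. y < \<bar>x \<bullet> b\<bar>")
  case True
  then show ?thesis
    by (simp add: less_min_abs_coord_iff exp_neg_norm_square_eq_prod prod_ennreal)
next
  case False
  then obtain b where b: "b \<in> Basis" "\<not> y < \<bar>x \<bullet> b\<bar>" by blast
  then have "(\<Prod>b\<in>Basis. indicator {t. y < \<bar>t\<bar>} (x \<bullet> b) * ennreal (exp (- (x \<bullet> b)\<^sup>2))) = 0"
    by (intro prod_zero) (auto intro!: bexI[OF _ b(1)])
  with False show ?thesis
    by (simp add: less_min_abs_coord_iff)
qed

lemma nn_integral_less_min_abs_coord_gaussian:
  "(\<integral>\<^sup>+ x. indicator {x. y < min_abs_coord x} x * ennreal (exp (- (norm x)\<^sup>2)) \<partial>(lborel::'a::euclidean_space measure)) =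
   gaussian_tail y ^ DIM('a)"
proof -
  have "(\<integral>\<^sup>+ x. indicator {x. y < min_abs_coord x} x * ennreal (exp (- (norm x)\<^sup>2)) \<partial>(lborel::'a measure)) =
        (\<Prod>b\<in>(Basis::'a set). gaussian_tail y)"
    unfolding indicator_less_min_abs_coord_gaussian gaussian_tail_def
    by (rule nn_integral_lborel_prod) auto
  then show ?thesis
    by simp
qed

lemma nn_integral_min_abs_coord_gaussian:
  "(\<integral>\<^sup>+ x. ennreal (min_abs_coord x * exp (- (norm x)\<^sup>2)) \<partial>(lborel::'a::euclidean_space measure)) =
   (\<integral>\<^sup>+ y. indicator {0..} y * gaussian_tail y ^ DIM('a) \<partial>lborel)"
proof -
  let ?G = "\<lambda>x::'a. ennreal (exp (- (norm x)\<^sup>2))"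
  have "ennreal (min_abs_coord x * exp (- (norm x)\<^sup>2)) =
        (\<integral>\<^sup>+ y. indicator {0..} y * (indicator {x. y < min_abs_coord x} x * ?G x) \<partial>lborel)" for x
  proof -
    have "(\<integral>\<^sup>+ y. indicator {0..} y * (indicator {x. y < min_abs_coord x} x * ?G x) \<partial>lborel) =
          (\<integral>\<^sup>+ y. ?G x * indicator {0..<min_abs_coord x} y \<partial>lborel)"
      by (intro nn_integral_cong) (auto simp: indicator_def)
    also have "\<dots> = ?G x * ennreal (min_abs_coord x)"
      using min_abs_coord_nonneg[of x] by (simp add: nn_integral_cmult_indicator)
    finally show ?thesis
      using min_abs_coord_nonneg[of x] by (simp add: ennreal_mult' mult.commute)
  qed
  then have "(\<integral>\<^sup>+ x. ennreal (min_abs_coord x * exp (- (norm x)\<^sup>2)) \<partial>(lborel::'a measure)) =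
        (\<integral>\<^sup>+ x. (\<integral>\<^sup>+ y. indicator {0..} y * (indicator {x. y < min_abs_coord x} x * ?G x) \<partial>lborel) \<partial>lborel)"
    by simp
  also have "\<dots> = (\<integral>\<^sup>+ y. (\<integral>\<^sup>+ x. indicator {0..} y * (indicator {x. y < min_abs_coord x} x * ?G x) \<partial>lborel) \<partial>lborel)"
    by (rule lborel_pair.Fubini'[symmetric]) measurable
  also have "\<dots> = (\<integral>\<^sup>+ y. indicator {0..} y * (\<integral>\<^sup>+ x. indicator {x. y < min_abs_coord x} x * ?G x \<partial>lborel) \<partial>lborel)"
    by (intro nn_integral_cong nn_integral_cmult) measurable
  finally show ?thesis
    by (simp add: nn_integral_less_min_abs_coord_gaussian)
qed

lemma integral_min_abs_coord_gaussian:
  "(\<integral>x. min_abs_coord x * exp (- (norm x)\<^sup>2) \<partial>(lborel::'a::euclidean_space measure)) =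
   sqrt pi ^ DIM('a) * (LBINT y:{0..}. (1 - (1 / sqrt pi) * (LBINT t=-y..y. exp (- (t ^ 2)))) ^ DIM('a))"
proof -
  let ?n = "DIM('a)"
  let ?\<Phi> = "\<lambda>y. (1 - (1 / sqrt pi) * (LBINT t=-y..y. exp (- (t ^ 2)))) ^ ?n"
  have tail: "indicator {0..} y * enn2real (gaussian_tail y) ^ ?n = sqrt pi ^ ?n * (indicator {0..} y * ?\<Phi> y)"
    for y :: real
    by (cases "0 \<le> y") (simp_all add: enn2real_gaussian_tail field_simps flip: power_mult_distrib)
  have finite: "indicator {0..} y * gaussian_tail y ^ ?n = ennreal (indicator {0..} y * enn2real (gaussian_tail y) ^ ?n)"
    for y :: real
    by (simp add: indicator_def ennreal_power[symmetric] ennreal_enn2real gaussian_tail_less_top)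
  have "(\<integral>x. min_abs_coord x * exp (- (norm x)\<^sup>2) \<partial>(lborel::'a measure)) =
        enn2real (\<integral>\<^sup>+ y. indicator {0..} y * gaussian_tail y ^ ?n \<partial>lborel)"
    by (simp add: integral_eq_nn_integral min_abs_coord_nonneg nn_integral_min_abs_coord_gaussian)
  also have "\<dots> = (\<integral>y. indicator {0..} y * enn2real (gaussian_tail y) ^ ?n \<partial>lborel)"
    unfolding finite by (simp add: integral_eq_nn_integral)
  also have "\<dots> = sqrt pi ^ ?n * (LBINT y:{0..}. ?\<Phi> y)"
    by (simp add: tail set_lebesgue_integral_def)
  finally show ?thesis .
qed

lemma Min_abs_vec_nth_eq_min_abs_coord: "Min ((\<lambda>i. \<bar>x $ i\<bar>) ` UNIV) = min_abs_coord (x :: real ^ 'n)"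
proof -
  have "(\<lambda>b. \<bar>x \<bullet> b\<bar>) ` Basis = (\<lambda>i. \<bar>x $ i\<bar>) ` UNIV"
    by (auto simp: Basis_vec_def image_iff cart_eq_inner_axis)
  then show ?thesis
    by (simp add: min_abs_coord_def)
qed

theorem mainTheorem1:
  fixes n :: nat
  assumes "n = CARD('n::finite)"
  shows "Emin TYPE('n) =
    Gamma (real n / 2) / Gamma ((real n + 1) / 2) *
    (LBINT y:{0..}. (1 - (1 / sqrt pi) * (LBINT x=-y..y. exp (- (x ^ 2)))) ^ n)"
proof -
  have "Emin TYPE('n) = integral\<^sup>L (sphere_surface :: (real ^ 'n) measure) min_abs_coord /
                         measure (sphere_surface :: (real ^ 'n) measure) (sphere 0 1)"
    by (simp add: Emin_def Min_abs_vec_nth_eq_min_abs_coord)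
  also have "\<dots> = Gamma (n / 2) / Gamma ((n + 1) / 2) *
                   (\<integral>x. min_abs_coord x * exp (- (norm x)\<^sup>2) \<partial>(lborel :: (real ^ 'n) measure)) / sqrt pi ^ n"
    using sphere_surface_average_homogeneous[where 'a="real ^ 'n", of min_abs_coord 1] assms
    by (simp add: min_abs_coord_nonneg min_abs_coord_scaleR)
  finally show ?thesis
    by (simp add: integral_min_abs_coord_gaussian assms add.commute)
qed

end
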